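(* Let $\bar D$ be any distribution of $(\mathsf X,\bar{\mathsf Y})$ on $\mathcal X\times\{0,1\}$ and $f\colon\mathcal X\to[0,1]$ a randomised classifier with $\mathrm{FNR}(f;\bar D)\ne1$. Then for every $\epsilon\in[0,\tfrac12]$, $\mathrm{BER}(f;\bar D)\le\epsilon$ implies $\mathrm{DI}(f;\bar D)\le2\epsilon$; equivalently, for every $\tau\in[0,1]$, $\mathrm{DI}(f;\bar D)\ge\tau$ implies $\mathrm{BER}(f;\bar D)\ge\tau/2$.
   Context: A randomised classifier $f\colon\mathcal X\to[0,1]$ predicts $1$ on $x$ with probability $f(x)$. $\mathrm{FNR}(f;\bar D)=\mathbb E_{\mathsf X\mid\bar{\mathsf Y}=1}[1-f(\mathsf X)]$, $\mathrm{FPR}(f;\bar D)=\mathbb E_{\mathsf X\mid\bar{\mathsf Y}=0}[f(\mathsf X)]$, the balanced error is $\mathrm{BER}(f;\bar D)=\frac{\mathrm{FPR}(f;\bar D)+\mathrm{FNR}(f;\bar D)}{2}$, and the disparate impact factor is $\mathrm{DI}(f;\bar D)=\frac{\mathrm{FPR}(f;\bar D)}{1-\mathrm{FNR}(f;\bar D)}$. *)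

theory Defs
  imports "HOL-Probability.Probability"
begin

text \<open>A distribution of (X, Ybar) is a probability measure D on the product space
  X \<times> bool (True = label 1). Conditional expectation given an event A of positive
  probability is E[g 1_A] / P(A).\<close>

definition cond_exp_event :: "('b) measure \<Rightarrow> 'b set \<Rightarrow> ('b \<Rightarrow> real) \<Rightarrow> real" where
  "cond_exp_event D A g = (LINT z:A|D. g z) / measure D A"

definition pos_event :: "('a \<times> bool) measure \<Rightarrow> ('a \<times> bool) set" where
  "pos_event D = {z \<in> space D. snd z}"

definition neg_event :: "('a \<times> bool) measure \<Rightarrow> ('a \<times> bool) set" where
  "neg_event D = {z \<in> space D. \<not> snd z}"

definition FNR :: "('a \<Rightarrow> real) \<Rightarrow> ('a \<times> bool) measure \<Rightarrow> real" where
  "FNR f D = cond_exp_event D (pos_event D) (\<lambda>z. 1 - f (fst z))"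

definition FPR :: "('a \<Rightarrow> real) \<Rightarrow> ('a \<times> bool) measure \<Rightarrow> real" where
  "FPR f D = cond_exp_event D (neg_event D) (\<lambda>z. f (fst z))"

definition BER :: "('a \<Rightarrow> real) \<Rightarrow> ('a \<times> bool) measure \<Rightarrow> real" where
  "BER f D = (FPR f D + FNR f D) / 2"

definition DI :: "('a \<Rightarrow> real) \<Rightarrow> ('a \<times> bool) measure \<Rightarrow> real" where
  "DI f D = FPR f D / (1 - FNR f D)"

end

theory Submission
  imports Defs
begin

text \<open>Write a = FPR and b = FNR, both in [0,1] with b < 1. When a + b \<le> 1 we have
  a \<le> (a + b)(1 - b), because the difference is b(1 - a - b) \<ge> 0; dividing by 1 - b gives
  DI \<le> a + b = 2 BER. When a + b > 1, BER already exceeds 1/2, which is all the second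
  claim needs since \<tau> \<le> 1.\<close>

lemma cond_exp_event_unit_interval:
  fixes D :: "'b measure"
  assumes "prob_space D" and pos: "measure D A > 0"
    and g_meas: "g \<in> borel_measurable D" and g_bounds: "\<And>z. 0 \<le> g z \<and> g z \<le> 1"
  shows "0 \<le> cond_exp_event D A g \<and> cond_exp_event D A g \<le> 1"
proof -
  interpret prob_space D by fact
  have A: "A \<in> sets D" using pos measure_notin_sets by fastforce
  have g_int: "set_integrable D A g"
    unfolding set_integrable_def
  proof (rule Bochner_Integration.integrable_bound[where f="\<lambda>_. 1::real"])
    show "integrable D (\<lambda>_. 1::real)" by simp
    show "(\<lambda>x. indicator A x *\<^sub>R g x) \<in> borel_measurable D" using g_meas A by measurable
    show "AE x in D. norm (indicator A x *\<^sub>R g x) \<le> norm (1::real)"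
      using g_bounds by (auto simp: indicator_def abs_le_iff)
  qed
  have one_int: "set_integrable D A (\<lambda>_. 1::real)"
    using A by (simp add: set_integrable_def emeasure_eq_measure)
  have "(LINT z:A|D. g z) \<le> (LINT z:A|D. 1)"
    using g_int one_int g_bounds by (intro set_integral_mono) auto
  also have "\<dots> = measure D A"
    using A by (simp add: set_lebesgue_integral_def integral_indicator emeasure_eq_measure)
  finally have upper: "(LINT z:A|D. g z) \<le> measure D A" .
  have lower: "0 \<le> (LINT z:A|D. g z)"
    using g_bounds unfolding set_lebesgue_integral_def
    by (intro integral_nonneg_AE) (auto simp: indicator_def)
  show ?thesis using upper lower pos by (simp add: cond_exp_event_def)
qed

lemma FPR_FNR_unit_interval:
  fixes X :: "'a measure" and D :: "('a \<times> bool) measure" and f :: "'a \<Rightarrow> real"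
  assumes "prob_space D"
    and sets_D: "sets D = sets (X \<Otimes>\<^sub>M count_space UNIV)"
    and "measure D (pos_event D) > 0" and "measure D (neg_event D) > 0"
    and f_meas: "f \<in> borel_measurable X" and f_bounds: "\<And>x. 0 \<le> f x \<and> f x \<le> 1"
  shows "0 \<le> FPR f D \<and> FPR f D \<le> 1" and "0 \<le> FNR f D \<and> FNR f D \<le> 1"
proof -
  have "(\<lambda>z. f (fst z)) \<in> borel_measurable (X \<Otimes>\<^sub>M count_space UNIV)"
    using f_meas by measurable
  then have fst_meas: "(\<lambda>z. f (fst z)) \<in> borel_measurable D"
    using measurable_cong_sets[OF sets_D refl] by blast
  show "0 \<le> FPR f D \<and> FPR f D \<le> 1"
    unfolding FPR_def
    by (rule cond_exp_event_unit_interval[OF assms(1,4) fst_meas]) (use f_bounds in auto)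
  have "(\<lambda>z. 1 - f (fst z)) \<in> borel_measurable D" using fst_meas by measurable
  then show "0 \<le> FNR f D \<and> FNR f D \<le> 1"
    unfolding FNR_def
    by (rule cond_exp_event_unit_interval[OF assms(1,3)]) (use f_bounds in auto)
qed

lemma divide_one_minus_le_add:
  fixes a b :: real
  assumes "0 \<le> b" "b < 1" "a + b \<le> 1"
  shows "a / (1 - b) \<le> a + b"
proof -
  have "0 \<le> b * (1 - a - b)" using assms by simp
  then have "a \<le> (a + b) * (1 - b)" by (simp add: algebra_simps)
  then show ?thesis using assms by (simp add: divide_simps)
qed

lemma DI_le_twice_BER:
  assumes "0 \<le> FNR f D" "FNR f D < 1" "BER f D \<le> 1/2"
  shows "DI f D \<le> 2 * BER f D"
proof -
  have "FPR f D / (1 - FNR f D) \<le> FPR f D + FNR f D"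
    using divide_one_minus_le_add assms by (simp add: BER_def)
  moreover have "2 * BER f D = FPR f D + FNR f D" by (simp add: BER_def)
  ultimately show ?thesis by (simp add: DI_def)
qed

theorem corollary3:
  fixes X :: "'a measure" and D :: "('a \<times> bool) measure" and f :: "'a \<Rightarrow> real"
  assumes "prob_space D"
    and "sets D = sets (X \<Otimes>\<^sub>M count_space UNIV)"
    and "measure D (pos_event D) > 0"
    and "measure D (neg_event D) > 0"
    and "f \<in> borel_measurable X"
    and "\<And>x. 0 \<le> f x \<and> f x \<le> 1"
    and "FNR f D \<noteq> 1"
  shows "(\<forall>\<epsilon>\<in>{0..1/2}. BER f D \<le> \<epsilon> \<longrightarrow> DI f D \<le> 2 * \<epsilon>) \<and>
         (\<forall>\<tau>\<in>{0..1}. DI f D \<ge> \<tau> \<longrightarrow> BER f D \<ge> \<tau> / 2)"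
proof -
  have FNR: "0 \<le> FNR f D" "FNR f D < 1"
    using FPR_FNR_unit_interval(2)[OF assms(1-6)] assms(7) by auto
  have DI_BER: "BER f D \<le> 1/2 \<Longrightarrow> DI f D \<le> 2 * BER f D"
    using DI_le_twice_BER FNR by blast
  show ?thesis
  proof (intro conjI ballI impI)
    fix \<epsilon> :: real assume "\<epsilon> \<in> {0..1/2}" "BER f D \<le> \<epsilon>"
    then show "DI f D \<le> 2 * \<epsilon>" using DI_BER by auto
  next
    fix \<tau> :: real assume "\<tau> \<in> {0..1}" "\<tau> \<le> DI f D"
    then show "\<tau> / 2 \<le> BER f D" using DI_BER by (cases "BER f D \<le> 1/2") auto
  qed
qed

end
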